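(* Let $(X,d)$ be a totally bounded metric space with II-modulus of total boundedness $\gamma$, let $\emptyset\ne F\subseteq X$ with a representation $(\tilde F_k)$, and let $G,H:\mathbb{R}_+\to\mathbb{R}_+$ have a $G$-modulus $\alpha_G$ and an $H$-modulus $\beta_H$. Let $(x_n)$ be a sequence in $X$ such that (1) $(x_n)$ is uniformly $(G,H)$-Fej\'er monotone w.r.t. $F$ with modulus $\chi$, and (2) $(x_n)$ has approximate $F$-points with $\Phi$ an approximate $F$-point bound. Then $(x_n)$ is Cauchy and, moreover, for all $k\in\mathbb{N}$ and all $g:\mathbb{N}\to\mathbb{N}$ there exists $N\le\Psi(k,g,\Phi,\chi,\alpha_G,\beta_H,\gamma)$ such that $d(x_i,x_j)\le\frac1{k+1}$ for all $i,j\in[N,N+g(N)]$, where $\Psi(k,g,\Phi,\chi,\alpha_G,\beta_H,\gamma):=\Psi_0(P)$ with $P:=\gamma(\alpha_G(2\beta_H(2k+1)+1))$, $\chi_g(n,r):=\chi(n,g(n),r)$, $\chi_g^M(n,r):=\max\{\chi_g(i,r)\mid i\le n\}$, and $$\Psi_0(0):=0,\qquad \Psi_0(n+1):=\Phi\Big(\chi_g^M\big(\Psi_0(n),\,2\beta_H(2k+1)+1\big)\Big).$$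
   Context: $\mathbb{N}$ includes $0$; $\mathbb{R}_+$ the nonnegative reals. A II-modulus of total boundedness for $X$ is $\gamma:\mathbb{N}\to\mathbb{N}$ such that for every $k$ and every sequence $(y_n)$ in $X$ there are $0\le i<j\le\gamma(k)$ with $d(y_i,y_j)\le\frac1{k+1}$. A representation of $F$ is a family of sets $\tilde F_k\subseteq X$ with $F=\bigcap_k\tilde F_k$; $AF_k:=\bigcap_{l\le k}\tilde F_l$. A $G$-modulus is $\alpha_G:\mathbb{N}\to\mathbb{N}$ with: for all $k$ and $a\in\mathbb{R}_+$, $a\le\frac1{\alpha_G(k)+1}$ implies $G(a)\le\frac1{k+1}$. An $H$-modulus is $\beta_H:\mathbb{N}\to\mathbb{N}$ with: for all $k$ and $a\in\mathbb{R}_+$, $H(a)\le\frac1{\beta_H(k)+1}$ implies $a\le\frac1{k+1}$. $(x_n)$ is uniformly $(G,H)$-Fej\'er monotone w.r.t. $F$ with modulus $\chi:\mathbb{N}^3\to\mathbb{N}$ if for all $r,n,m\in\mathbb{N}$ and all $p\in X$ with $p\in AF_{\chi(n,m,r)}$ one has $H(d(x_{n+l},p))<G(d(x_n,p))+\frac1{r+1}$ for all $l\le m$. $(x_n)$ has approximate $F$-points if for every $k$ some $x_N\in AF_k$; an approximate $F$-point bound is a monotone nondecreasing $\Phi:\mathbb{N}\to\mathbb{N}$ such that for every $k$ there is $N\le\Phi(k)$ with $x_N\in AF_k$ (the paper assumes throughout that approximate $F$-point bounds are nondecreasing). *)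

theory Defs
  imports "HOL-Analysis.Analysis"
begin

definition II_modulus :: "'a::metric_space set \<Rightarrow> (nat \<Rightarrow> nat) \<Rightarrow> bool" where
  "II_modulus X \<gamma> \<longleftrightarrow> (\<forall>k. \<forall>y::nat \<Rightarrow> 'a. (\<forall>n. y n \<in> X) \<longrightarrow>
     (\<exists>i j. i < j \<and> j \<le> \<gamma> k \<and> dist (y i) (y j) \<le> 1 / (real k + 1)))"

definition is_representation :: "'a set \<Rightarrow> 'a set \<Rightarrow> (nat \<Rightarrow> 'a set) \<Rightarrow> bool" where
  "is_representation X F Ft \<longleftrightarrow> (\<forall>k. Ft k \<subseteq> X) \<and> F = (\<Inter>k. Ft k)"

definition AF :: "(nat \<Rightarrow> 'a set) \<Rightarrow> nat \<Rightarrow> 'a set" where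
  "AF Ft k = (\<Inter>l\<in>{..k}. Ft l)"

definition G_modulus :: "(real \<Rightarrow> real) \<Rightarrow> (nat \<Rightarrow> nat) \<Rightarrow> bool" where
  "G_modulus G \<alpha> \<longleftrightarrow> (\<forall>k. \<forall>a\<ge>0. a \<le> 1 / (real (\<alpha> k) + 1) \<longrightarrow> G a \<le> 1 / (real k + 1))"

definition H_modulus :: "(real \<Rightarrow> real) \<Rightarrow> (nat \<Rightarrow> nat) \<Rightarrow> bool" where
  "H_modulus H \<beta> \<longleftrightarrow> (\<forall>k. \<forall>a\<ge>0. H a \<le> 1 / (real (\<beta> k) + 1) \<longrightarrow> a \<le> 1 / (real k + 1))"

definition unif_GH_fejer :: "'a::metric_space set \<Rightarrow> (nat \<Rightarrow> 'a set) \<Rightarrow> (real \<Rightarrow> real) \<Rightarrow> (real \<Rightarrow> real)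
    \<Rightarrow> (nat \<Rightarrow> 'a) \<Rightarrow> (nat \<Rightarrow> nat \<Rightarrow> nat \<Rightarrow> nat) \<Rightarrow> bool" where
  "unif_GH_fejer X Ft G H x chi \<longleftrightarrow> (\<forall>r n m. \<forall>p\<in>X. p \<in> AF Ft (chi n m r) \<longrightarrow>
     (\<forall>l\<le>m. H (dist (x (n + l)) p) < G (dist (x n) p) + 1 / (real r + 1)))"

definition has_approx_F_points :: "(nat \<Rightarrow> 'a set) \<Rightarrow> (nat \<Rightarrow> 'a) \<Rightarrow> bool" where
  "has_approx_F_points Ft x \<longleftrightarrow> (\<forall>k. \<exists>N. x N \<in> AF Ft k)"

definition approx_F_point_bound :: "(nat \<Rightarrow> 'a set) \<Rightarrow> (nat \<Rightarrow> 'a) \<Rightarrow> (nat \<Rightarrow> nat) \<Rightarrow> bool" where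
  "approx_F_point_bound Ft x \<Phi> \<longleftrightarrow> mono \<Phi> \<and> (\<forall>k. \<exists>N\<le>\<Phi> k. x N \<in> AF Ft k)"

definition chiM :: "(nat \<Rightarrow> nat \<Rightarrow> nat \<Rightarrow> nat) \<Rightarrow> (nat \<Rightarrow> nat) \<Rightarrow> nat \<Rightarrow> nat \<Rightarrow> nat" where
  "chiM chi g n r = Max ((\<lambda>i. chi i (g i) r) ` {..n})"

primrec Psi0 :: "(nat \<Rightarrow> nat) \<Rightarrow> (nat \<Rightarrow> nat \<Rightarrow> nat \<Rightarrow> nat) \<Rightarrow> (nat \<Rightarrow> nat) \<Rightarrow> nat \<Rightarrow> nat \<Rightarrow> nat" where
  "Psi0 \<Phi> chi g c 0 = 0"
| "Psi0 \<Phi> chi g c (Suc n) = \<Phi> (chiM chi g (Psi0 \<Phi> chi g c n) c)"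

definition Psi :: "nat \<Rightarrow> (nat \<Rightarrow> nat) \<Rightarrow> (nat \<Rightarrow> nat) \<Rightarrow> (nat \<Rightarrow> nat \<Rightarrow> nat \<Rightarrow> nat)
    \<Rightarrow> (nat \<Rightarrow> nat) \<Rightarrow> (nat \<Rightarrow> nat) \<Rightarrow> (nat \<Rightarrow> nat) \<Rightarrow> nat" where
  "Psi k g \<Phi> chi \<alpha> \<beta> \<gamma> =
     Psi0 \<Phi> chi g (2 * \<beta> (2 * k + 1) + 1) (\<gamma> (\<alpha> (2 * \<beta> (2 * k + 1) + 1)))"

end

theory Submission
  imports Defs
begin

text \<open>Choose approximate F-points x (m 1), x (m 2), ... in increasingly small sets
  AF Ft K, where the accuracy needed for x (m (j+1)) is dictated by the Fej\'er modulus at all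
  indices up to the bound on m j. Total boundedness then yields two close points x (m i) and
  x (m j) with i < j; since x (m j) is accurate enough for the Fej\'er property at N = m i, every
  x l with l in [N, N + g N] stays close to x (m j), hence the whole window is small. The
  bound Psi0 tracks m i along this construction. Cauchyness follows from this metastability
  by taking g to reach two distant points.\<close>

lemma chiM_ge: "i \<le> n \<Longrightarrow> chi i (g i) r \<le> chiM chi g n r"
  unfolding chiM_def by (rule Max_ge) auto

lemma chiM_mono: "n \<le> n' \<Longrightarrow> chiM chi g n r \<le> chiM chi g n' r"
  unfolding chiM_def by (rule Max_mono) auto

lemma Psi0_mono:
  assumes "mono \<Phi>" and "m \<le> n"
  shows "Psi0 \<Phi> chi g c m \<le> Psi0 \<Phi> chi g c n"
proof -
  have "Psi0 \<Phi> chi g c n \<le> Psi0 \<Phi> chi g c (Suc n)" for n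
  proof (induction n)
    case 0
    then show ?case by simp
  next
    case (Suc n)
    then show ?case using assms(1) chiM_mono by (simp add: monoD)
  qed
  then show ?thesis using assms(2) by (rule lift_Suc_mono_le)
qed

lemma AF_antimono: "k \<le> k' \<Longrightarrow> AF Ft k' \<subseteq> AF Ft k"
  unfolding AF_def by auto

lemma approx_F_point_sequence:
  assumes "approx_F_point_bound Ft x \<Phi>"
  obtains m where "\<And>i. m i \<le> Psi0 \<Phi> chi g c i"
    and "\<And>i j. i < j \<Longrightarrow> x (m j) \<in> AF Ft (chi (m i) (g (m i)) c)"
proof -
  have mono: "mono \<Phi>" and "\<forall>K. \<exists>N\<le>\<Phi> K. x N \<in> AF Ft K"
    using assms unfolding approx_F_point_bound_def by auto
  then obtain h where h_le: "\<And>K. h K \<le> \<Phi> K" and h_AF: "\<And>K. x (h K) \<in> AF Ft K"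
    by metis
  define Q where "Q = Psi0 \<Phi> chi g c"
  define m where "m i = (case i of 0 \<Rightarrow> 0 | Suc j \<Rightarrow> h (chiM chi g (Q j) c))" for i
  have m_le: "m i \<le> Q i" for i
    using h_le by (cases i) (auto simp: m_def Q_def)
  have m_AF: "x (m j) \<in> AF Ft (chi (m i) (g (m i)) c)" if "i < j" for i j
  proof -
    obtain j' where j': "j = Suc j'" using \<open>i < j\<close> by (cases j) auto
    have "Q i \<le> Q j'" using Psi0_mono[OF mono] \<open>i < j\<close> j' unfolding Q_def by simp
    then have "m i \<le> Q j'" using m_le[of i] by linarith
    then have "chi (m i) (g (m i)) c \<le> chiM chi g (Q j') c" by (rule chiM_ge)
    then have "AF Ft (chiM chi g (Q j') c) \<subseteq> AF Ft (chi (m i) (g (m i)) c)"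
      by (rule AF_antimono)
    moreover have "x (m j) \<in> AF Ft (chiM chi g (Q j') c)" using h_AF by (simp add: m_def j')
    ultimately show ?thesis by blast
  qed
  show ?thesis using m_le m_AF unfolding Q_def by (rule that)
qed

text \<open>With r = 2 \<beta> k + 1 the Fej\'er error 1/(r+1) and the assumed bound on G add up to
  exactly 1/(\<beta> k + 1), which is what the H-modulus needs.\<close>

lemma fejer_window_dist_le:
  assumes fej: "unif_GH_fejer X Ft G H x chi" and Hm: "H_modulus H \<beta>"
    and p: "p \<in> X" "p \<in> AF Ft (chi N m (2 * \<beta> k + 1))"
    and G_le: "G (dist (x N) p) \<le> 1 / (real (2 * \<beta> k + 1) + 1)"
    and "l \<le> m"
  shows "dist (x (N + l)) p \<le> 1 / (real k + 1)"
proof -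
  have "H (dist (x (N + l)) p) < G (dist (x N) p) + 1 / (real (2 * \<beta> k + 1) + 1)"
    using fej[unfolded unif_GH_fejer_def, rule_format, OF p \<open>l \<le> m\<close>] .
  also have "\<dots> \<le> 2 / (real (2 * \<beta> k + 1) + 1)" using G_le by simp
  also have "\<dots> = 1 / (real (\<beta> k) + 1)" by (simp add: field_simps)
  finally have "H (dist (x (N + l)) p) \<le> 1 / (real (\<beta> k) + 1)" by (rule less_imp_le)
  then show ?thesis by (rule Hm[unfolded H_modulus_def, rule_format, OF zero_le_dist])
qed

lemma metastable_approx_F_points:
  fixes x :: "nat \<Rightarrow> 'a::metric_space"
  assumes tb: "II_modulus X \<gamma>" and Gm: "G_modulus G \<alpha>" and Hm: "H_modulus H \<beta>"
    and xX: "\<forall>n. x n \<in> X"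
    and fej: "unif_GH_fejer X Ft G H x chi"
    and bound: "approx_F_point_bound Ft x \<Phi>"
  shows "\<exists>N \<le> Psi k g \<Phi> chi \<alpha> \<beta> \<gamma>.
       \<forall>i j. N \<le> i \<and> i \<le> N + g N \<and> N \<le> j \<and> j \<le> N + g N \<longrightarrow>
         dist (x i) (x j) \<le> 1 / (real k + 1)"
proof -
  define c where "c = 2 * \<beta> (2 * k + 1) + 1"
  obtain m where m_le: "\<And>i. m i \<le> Psi0 \<Phi> chi g c i"
    and m_AF: "\<And>i j. i < j \<Longrightarrow> x (m j) \<in> AF Ft (chi (m i) (g (m i)) c)"
    using approx_F_point_sequence[OF bound] by blast
  have "\<forall>n. x (m n) \<in> X" using xX by simp
  then obtain i j where ij: "i < j" "j \<le> \<gamma> (\<alpha> c)"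
    and close: "dist (x (m i)) (x (m j)) \<le> 1 / (real (\<alpha> c) + 1)"
    using tb[unfolded II_modulus_def, rule_format, where k = "\<alpha> c" and y = "\<lambda>n. x (m n)"] by blast
  define N where "N = m i"
  define p where "p = x (m j)"
  have G_le: "G (dist (x N) p) \<le> 1 / (real c + 1)"
    using Gm[unfolded G_modulus_def, rule_format, OF zero_le_dist close]
    unfolding N_def p_def .
  have near_p: "dist (x l) p \<le> 1 / (real (2 * k + 1) + 1)" if "N \<le> l" "l \<le> N + g N" for l
    using fejer_window_dist_le[OF fej Hm, of p N "g N" "2 * k + 1" "l - N"]
      xX m_AF[OF ij(1)] G_le that
    unfolding N_def p_def c_def by simp
  have "dist (x a) (x b) \<le> 1 / (real k + 1)"
    if "N \<le> a" "a \<le> N + g N" "N \<le> b" "b \<le> N + g N" for a b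
  proof -
    have "dist (x a) (x b) \<le> dist (x a) p + dist (x b) p" by (rule dist_triangle2)
    also have "\<dots> \<le> 2 / (real (2 * k + 1) + 1)"
      using near_p[of a] near_p[of b] that by simp
    also have "\<dots> = 1 / (real k + 1)" by (simp add: field_simps)
    finally show ?thesis .
  qed
  moreover have "N \<le> Psi k g \<Phi> chi \<alpha> \<beta> \<gamma>"
    using m_le[of i] Psi0_mono[of \<Phi> i "\<gamma> (\<alpha> c)" chi g c] bound ij
    unfolding N_def Psi_def c_def approx_F_point_bound_def by simp
  ultimately show ?thesis by blast
qed

lemma Cauchy_if_metastable:
  fixes x :: "nat \<Rightarrow> 'a::metric_space"
  assumes "\<And>k g. \<exists>N. \<forall>i j. N \<le> i \<and> i \<le> N + g N \<and> N \<le> j \<and> j \<le> N + g N \<longrightarrow>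
             dist (x i) (x j) \<le> 1 / (real k + 1)"
  shows "Cauchy x"
proof (rule ccontr)
  assume "\<not> Cauchy x"
  then obtain e where "e > 0" and "\<forall>M. \<exists>a\<ge>M. \<exists>b\<ge>M. e \<le> dist (x a) (x b)"
    unfolding Cauchy_def by (metis not_le)
  then obtain fa fb where far: "\<And>M. M \<le> fa M \<and> M \<le> fb M \<and> e \<le> dist (x (fa M)) (x (fb M))"
    by metis
  obtain k :: nat where k: "1 / (real k + 1) < e"
    using \<open>e > 0\<close> by (metis add.commute nat_approx_posE of_nat_Suc)
  obtain N where "\<forall>i j. N \<le> i \<and> i \<le> N + (fa N + fb N) \<and> N \<le> j \<and> j \<le> N + (fa N + fb N) \<longrightarrow>
      dist (x i) (x j) \<le> 1 / (real k + 1)"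
    using assms[where k = k and g = "\<lambda>M. fa M + fb M"] by blast
  then have "dist (x (fa N)) (x (fb N)) \<le> 1 / (real k + 1)" using far[of N] by auto
  then show False using far[of N] k by linarith
qed

theorem theorem5p1:
  fixes X F :: "'a::metric_space set" and Ft :: "nat \<Rightarrow> 'a set"
    and \<gamma> \<alpha> \<beta> \<Phi> :: "nat \<Rightarrow> nat" and G H :: "real \<Rightarrow> real"
    and x :: "nat \<Rightarrow> 'a" and chi :: "nat \<Rightarrow> nat \<Rightarrow> nat \<Rightarrow> nat"
  assumes "II_modulus X \<gamma>"
    and "F \<noteq> {}" and "F \<subseteq> X" and "is_representation X F Ft"
    and "\<forall>a\<ge>0. G a \<ge> 0" and "\<forall>a\<ge>0. H a \<ge> 0"
    and "G_modulus G \<alpha>" and "H_modulus H \<beta>"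
    and "\<forall>n. x n \<in> X"
    and "unif_GH_fejer X Ft G H x chi"
    and "has_approx_F_points Ft x" and "approx_F_point_bound Ft x \<Phi>"
  shows "Cauchy x \<and>
    (\<forall>k g. \<exists>N \<le> Psi k g \<Phi> chi \<alpha> \<beta> \<gamma>.
       \<forall>i j. N \<le> i \<and> i \<le> N + g N \<and> N \<le> j \<and> j \<le> N + g N \<longrightarrow>
         dist (x i) (x j) \<le> 1 / (real k + 1))"
proof -
  have rate: "\<exists>N \<le> Psi k g \<Phi> chi \<alpha> \<beta> \<gamma>.
       \<forall>i j. N \<le> i \<and> i \<le> N + g N \<and> N \<le> j \<and> j \<le> N + g N \<longrightarrow>
         dist (x i) (x j) \<le> 1 / (real k + 1)" for k g
    using metastable_approx_F_points[OF assms(1,7,8,9,10,12)] .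
  then have "Cauchy x" by (intro Cauchy_if_metastable) blast
  with rate show ?thesis by blast
qed

end
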